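(* Let $d\ge1$, $s\in(0,1/2)$, $\Omega\subset\mathbb{R}^d$ a bounded domain and $g\in L^\infty(\Omega^c)$. For $H\ge1$ let $g_H$ be as in the context. Let $u$ be the minimizer of $I_s$ over $\mathbb{V}^g$ and $u^H$ the minimizer of $I_s$ over $\mathbb{V}^{g_H}$, and assume $u\in L^\infty(\mathbb{R}^d)$ and $\sup_{H\ge1}\|u^H\|_{L^\infty(\mathbb{R}^d)}<\infty$. Then there is a constant $C$ independent of $H$ such that \[ \big|I_s[u]-I_s[u^H]\big|\le C\,H^{-1-2s}\qquad\text{for all } H\ge 1. \]
   Context: $\Omega^c=\mathbb{R}^d\setminus\Omega$, $Q_\Omega := (\mathbb{R}^d\times\mathbb{R}^d)\setminus(\Omega^c\times\Omega^c)$, $F_s(\rho) := \int_0^\rho \frac{\rho-r}{(1+r^2)^{(d+1+2s)/2}}\,dr$, and $I_s[u] := \iint_{Q_\Omega} F_s\!\left(\frac{u(x)-u(y)}{|x-y|}\right)\frac{dx\,dy}{|x-y|^{d+2s-1}}$. For a function $g$ on $\Omega^c$, $\mathbb{V}^g := \{v:\mathbb{R}^d\to\mathbb{R} : v|_\Omega\in W^{2s}_1(\Omega),\ v=g \text{ in }\Omega^c\}$. For $H>0$, $\Omega_H$ is a bounded open set containing $\Omega$ such that $c_1H\le \operatorname{dist}(x,\overline\Omega)\le c_2 H$ for all $x\in\partial\Omega_H$, with fixed constants $0<c_1\le c_2$. The cutoff $\eta_H\in C^\infty(\Omega^c)$ satisfies $0\le\eta_H\le1$, $\operatorname{supp}\eta_H\subset\overline{\Omega}_{H+1}\setminus\Omega$,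 and $\eta_H=1$ on $\Omega_H\setminus\Omega$. Set $g_H:=g\eta_H$. *)

theory Defs
  imports "HOL-Analysis.Analysis"
begin

definition Fs :: "nat \<Rightarrow> real \<Rightarrow> real \<Rightarrow> real" where
  "Fs n s \<rho> = interval_lebesgue_integral lborel 0 (ereal \<rho>) (\<lambda>r. (\<rho> - r) / (1 + r^2) powr ((real n + 1 + 2 * s) / 2))"

definition QOmega :: "'a set \<Rightarrow> ('a \<times> 'a) set" where
  "QOmega \<Omega> = UNIV - ((- \<Omega>) \<times> (- \<Omega>))"

definition Is :: "real \<Rightarrow> 'a::euclidean_space set \<Rightarrow> ('a \<Rightarrow> real) \<Rightarrow> ennreal" where
  "Is s \<Omega> u = (\<integral>\<^sup>+ p \<in> QOmega \<Omega>.
      ennreal (Fs DIM('a) s ((u (fst p) - u (snd p)) / norm (fst p - snd p))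
               / norm (fst p - snd p) powr (real DIM('a) + 2 * s - 1))
      \<partial>(lborel \<Otimes>\<^sub>M lborel))"

definition frac_W1 :: "real \<Rightarrow> 'a::euclidean_space set \<Rightarrow> ('a \<Rightarrow> real) \<Rightarrow> bool" where
  "frac_W1 \<sigma> \<Omega> v \<longleftrightarrow> set_integrable lborel \<Omega> v \<and>
     (\<integral>\<^sup>+ p \<in> \<Omega> \<times> \<Omega>. ennreal (\<bar>v (fst p) - v (snd p)\<bar> / norm (fst p - snd p) powr (real DIM('a) + \<sigma>))
        \<partial>(lborel \<Otimes>\<^sub>M lborel)) < \<infinity>"

definition Vg :: "real \<Rightarrow> 'a::euclidean_space set \<Rightarrow> ('a \<Rightarrow> real) \<Rightarrow> ('a \<Rightarrow> real) set" where
  "Vg s \<Omega> g = {v. frac_W1 (2 * s) \<Omega> v \<and> (\<forall>x\<in>- \<Omega>. v x = g x)}"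

definition is_minimizer :: "real \<Rightarrow> 'a::euclidean_space set \<Rightarrow> ('a \<Rightarrow> real) \<Rightarrow> ('a \<Rightarrow> real) \<Rightarrow> bool" where
  "is_minimizer s \<Omega> g u \<longleftrightarrow> u \<in> Vg s \<Omega> g \<and> (\<forall>v\<in>Vg s \<Omega> g. Is s \<Omega> u \<le> Is s \<Omega> v)"

fun iter_dd :: "'a::euclidean_space list \<Rightarrow> ('a \<Rightarrow> real) \<Rightarrow> 'a \<Rightarrow> real" where
  "iter_dd [] f = f"
| "iter_dd (v # vs) f = (\<lambda>x. frechet_derivative (iter_dd vs f) (at x) v)"

definition smooth_fun :: "('a::euclidean_space \<Rightarrow> real) \<Rightarrow> bool" where
  "smooth_fun f \<longleftrightarrow> (\<forall>vs x. iter_dd vs f differentiable (at x))"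

definition smooth_on_set :: "'a::euclidean_space set \<Rightarrow> ('a \<Rightarrow> real) \<Rightarrow> bool" where
  "smooth_on_set S f \<longleftrightarrow> (\<exists>F. smooth_fun F \<and> (\<forall>x\<in>S. f x = F x))"

end

theory Submission
  imports Defs
begin

text \<open>Patch the competitor: let \<open>v\<close> equal \<open>u\<^sup>H\<close> in \<open>\<Omega>\<close> and \<open>g\<close> outside. It is admissible for the
  datum \<open>g\<close>, so \<open>I\<^sub>s[u] \<le> I\<^sub>s[v]\<close>. Since \<open>g\<^sub>H = g\<close> on \<open>\<Omega>\<^sub>H\<close>, \<open>v\<close> and \<open>u\<^sup>H\<close> differ only at points
  at distance at least \<open>c\<^sub>1 H\<close> from \<open>\<Omega>\<close>, so the two energies differ only through interactions of
  \<open>\<Omega>\<close> with that far region. There \<open>F\<^sub>s(\<rho>) \<le> \<rho>\<^sup>2\<close> and a common bound \<open>M\<close> on the data bound the integrand by \<open>4M\<^sup>2|x-y|\<^sup>-\<^sup>d\<^sup>-\<^sup>2\<^sup>s\<^sup>-\<^sup>1\<close>,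
  whose integral over \<open>|x - y| \<ge> c\<^sub>1 H\<close> is \<open>O(H\<^sup>-\<^sup>1\<^sup>-\<^sup>2\<^sup>s)\<close>. Exchanging the roles of \<open>u\<close> and \<open>u\<^sup>H\<close>
  gives the reverse inequality.\<close>

lemma abs_set_integral_Ioo_le:
  fixes f :: "real \<Rightarrow> real"
  assumes "a \<le> b" "0 \<le> K" "\<And>x. a < x \<Longrightarrow> x < b \<Longrightarrow> \<bar>f x\<bar> \<le> K"
  shows "\<bar>set_lebesgue_integral lborel {a<..<b} f\<bar> \<le> K * (b - a)"
proof (cases "integrable lborel (\<lambda>x. indicator {a<..<b} x *\<^sub>R f x)")
  case True
  have "ennreal \<bar>set_lebesgue_integral lborel {a<..<b} f\<bar>
      \<le> (\<integral>\<^sup>+x. norm (indicator {a<..<b} x *\<^sub>R f x) \<partial>lborel)"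
    using integral_norm_bound_ennreal[OF True] unfolding set_lebesgue_integral_def by simp
  also have "\<dots> \<le> (\<integral>\<^sup>+x. ennreal K * indicator {a<..<b} x \<partial>lborel)"
    by (intro nn_integral_mono) (auto simp: indicator_def assms(3) intro!: ennreal_leI)
  also have "\<dots> = ennreal (K * (b - a))"
    using assms by (simp add: nn_integral_cmult ennreal_mult)
  finally show ?thesis by (simp add: ennreal_le_iff assms)
next
  case False
  then show ?thesis
    using assms unfolding set_lebesgue_integral_def by (simp add: not_integrable_integral_eq)
qed

lemma Fs_le_square:
  assumes "0 \<le> s"
  shows "Fs n s \<rho> \<le> \<rho>\<^sup>2"
proof -
  define a where "a = (real n + 1 + 2 * s) / 2"
  define f where "f r = (\<rho> - r) / (1 + r\<^sup>2) powr a" for r :: real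
  have weight_ge_1: "1 \<le> (1 + r\<^sup>2) powr a" for r :: real
    using assms by (intro ge_one_powr_ge_zero) (auto simp: a_def)
  have f_le: "\<bar>f r\<bar> \<le> \<bar>\<rho> - r\<bar>" for r
    using weight_ge_1[of r] by (simp add: f_def abs_div divide_le_eq mult_le_cancel_left1)
  have Fs_eq: "Fs n s \<rho> = interval_lebesgue_integral lborel (ereal 0) (ereal \<rho>) f"
    unfolding Fs_def f_def a_def by (simp add: zero_ereal_def)
  show ?thesis
  proof (cases "0 \<le> \<rho>")
    case True
    have "\<bar>set_lebesgue_integral lborel {0<..<\<rho>} f\<bar> \<le> \<rho> * (\<rho> - 0)"
      using True by (intro abs_set_integral_Ioo_le) (auto intro: order_trans[OF f_le])
    then show ?thesis
      using True unfolding Fs_eq interval_lebesgue_integral_def by (simp add: power2_eq_square)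
  next
    case False
    have "\<bar>set_lebesgue_integral lborel {\<rho><..<0} f\<bar> \<le> (- \<rho>) * (0 - \<rho>)"
      using False by (intro abs_set_integral_Ioo_le) (auto intro: order_trans[OF f_le])
    then show ?thesis
      using False unfolding Fs_eq interval_lebesgue_integral_def by (simp add: power2_eq_square)
  qed
qed

lemma Fs_difference_quotient_le:
  fixes a b r M s :: real
  assumes "0 \<le> s" "0 < r" "\<bar>a\<bar> \<le> M" "\<bar>b\<bar> \<le> M"
  shows "Fs d s ((a - b) / r) / r powr (real d + 2 * s - 1) \<le> 4 * M\<^sup>2 * r powr (- (real d + 2 * s + 1))"
proof -
  define e where "e = real d + 2 * s - 1"
  have "((a - b) / r)\<^sup>2 = \<bar>a - b\<bar>\<^sup>2 / r\<^sup>2" by (simp add: power_divide)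
  also have "\<dots> \<le> (2 * M)\<^sup>2 / r\<^sup>2"
    using assms by (intro divide_right_mono power_mono) auto
  finally have "Fs d s ((a - b) / r) \<le> 4 * M\<^sup>2 / r\<^sup>2"
    using Fs_le_square[OF assms(1), of d "(a - b) / r"] by (simp add: power_mult_distrib)
  then have "Fs d s ((a - b) / r) / r powr e \<le> 4 * M\<^sup>2 / r\<^sup>2 / r powr e"
    by (intro divide_right_mono) auto
  also have "4 * M\<^sup>2 / r\<^sup>2 / r powr e = 4 * M\<^sup>2 * r powr (- (e + 2))"
  proof -
    have "r powr (- (e + 2)) = 1 / (r powr e * r powr 2)"
      using assms(2) by (simp only: powr_minus_divide powr_add)
    then show ?thesis using assms(2) by (simp add: powr_numeral)
  qed
  finally show ?thesis unfolding e_def by (simp add: algebra_simps)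
qed

lemma nn_integral_add_le:
  assumes "g \<in> borel_measurable M"
  shows "(\<integral>\<^sup>+x. f x + g x \<partial>M) \<le> integral\<^sup>N M f + integral\<^sup>N M g"
  unfolding nn_integral_def[of M "\<lambda>x. f x + g x"]
proof (rule SUP_least, safe)
  fix \<phi> assume \<phi>: "simple_function M \<phi>" "\<phi> \<le> (\<lambda>x. f x + g x)"
  \<comment> \<open>\<open>f\<close> need not be measurable (\<open>Is\<close> is defined for arbitrary functions), so
    \<open>nn_integral_add\<close> is unavailable; instead \<open>\<phi>\<close> is split into \<open>g\<close> and a measurable part below \<open>f\<close>.\<close>
  define h where "h x = (if g x = \<infinity> then 0 else \<phi> x - g x)" for x
  have h_meas: "h \<in> borel_measurable M"
    unfolding h_def using borel_measurable_simple_function[OF \<phi>(1)] assms by measurable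
  have "integral\<^sup>S M \<phi> = integral\<^sup>N M \<phi>"
    using \<phi>(1) by (simp add: nn_integral_eq_simple_integral)
  also have "\<dots> \<le> (\<integral>\<^sup>+x. h x + g x \<partial>M)"
    by (intro nn_integral_mono) (auto simp: h_def diff_add_self_ennreal)
  also have "\<dots> = integral\<^sup>N M h + integral\<^sup>N M g"
    using h_meas assms by (intro nn_integral_add) auto
  also have "integral\<^sup>N M h \<le> integral\<^sup>N M f"
    using \<phi>(2) by (intro nn_integral_mono) (auto simp: le_fun_def h_def ennreal_minus_le_iff add.commute)
  finally show "integral\<^sup>S M \<phi> \<le> integral\<^sup>N M f + integral\<^sup>N M g" by (simp add: add_right_mono)
qed

lemma (in sigma_finite_measure) AE_pair_measure_fst:
  assumes "AE x in N. P x"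
  shows "AE p in N \<Otimes>\<^sub>M M. P (fst p)"
proof -
  obtain A where "\<And>x. x \<in> space N - A \<Longrightarrow> P x" "A \<in> null_sets N"
    using AE_E3[OF assms] by blast
  then show ?thesis
    by (intro AE_I'[where N="A \<times> space M"]) (auto simp: space_pair_measure, blast)
qed

lemma (in sigma_finite_measure) AE_pair_measure_snd:
  assumes "AE x in M. P x"
  shows "AE p in N \<Otimes>\<^sub>M M. P (snd p)"
proof -
  obtain A where "\<And>x. x \<in> space M - A \<Longrightarrow> P x" "A \<in> null_sets M"
    using AE_E3[OF assms] by blast
  then show ?thesis
    by (intro AE_I'[where N="space N \<times> A"]) (auto simp: space_pair_measure, blast)
qed

lemma nn_integral_lborel_translate:
  fixes h :: "'a::euclidean_space \<Rightarrow> ennreal"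
  assumes "h \<in> borel_measurable borel"
  shows "(\<integral>\<^sup>+y. h (y - x) \<partial>lborel) = integral\<^sup>N lborel h"
proof -
  have "(\<integral>\<^sup>+y. h (y - x) \<partial>lborel) = (\<integral>\<^sup>+y. h y \<partial>distr lborel borel ((+) (- x)))"
    using assms by (subst nn_integral_distr) auto
  then show ?thesis by (simp add: lborel_distr_plus)
qed

lemma nn_integral_pair_indicator_translate:
  fixes h :: "'a::euclidean_space \<Rightarrow> ennreal"
  assumes [measurable]: "A \<in> sets borel" "h \<in> borel_measurable borel"
  shows "(\<integral>\<^sup>+p. indicator A (fst p) * h (snd p - fst p) \<partial>(lborel \<Otimes>\<^sub>M lborel)) = emeasure lborel A * integral\<^sup>N lborel h"
    and "(\<integral>\<^sup>+p. indicator A (snd p) * h (fst p - snd p) \<partial>(lborel \<Otimes>\<^sub>M lborel)) = emeasure lborel A * integral\<^sup>N lborel h"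
proof -
  have inner: "(\<integral>\<^sup>+y. indicator A x * h (y - x) \<partial>lborel) = integral\<^sup>N lborel h * indicator A x" for x
    by (simp add: nn_integral_cmult nn_integral_lborel_translate mult.commute)
  have "(\<integral>\<^sup>+p. indicator A (fst p) * h (snd p - fst p) \<partial>(lborel \<Otimes>\<^sub>M lborel))
      = (\<integral>\<^sup>+x. \<integral>\<^sup>+y. indicator A x * h (y - x) \<partial>lborel \<partial>lborel)"
    by (subst lborel.nn_integral_fst[symmetric]) (auto simp: split_beta')
  also have "\<dots> = emeasure lborel A * integral\<^sup>N lborel h"
    unfolding inner by (subst nn_integral_cmult_indicator) (auto simp: mult.commute)
  finally show "(\<integral>\<^sup>+p. indicator A (fst p) * h (snd p - fst p) \<partial>(lborel \<Otimes>\<^sub>M lborel)) = emeasure lborel A * integral\<^sup>N lborel h" .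
  have "(\<integral>\<^sup>+p. indicator A (snd p) * h (fst p - snd p) \<partial>(lborel \<Otimes>\<^sub>M lborel))
      = (\<integral>\<^sup>+y. \<integral>\<^sup>+x. indicator A y * h (x - y) \<partial>lborel \<partial>lborel)"
    by (subst lborel_pair.nn_integral_snd[symmetric]) (auto simp: split_beta')
  also have "\<dots> = emeasure lborel A * integral\<^sup>N lborel h"
    unfolding inner by (subst nn_integral_cmult_indicator) (auto simp: mult.commute)
  finally show "(\<integral>\<^sup>+p. indicator A (snd p) * h (fst p - snd p) \<partial>(lborel \<Otimes>\<^sub>M lborel)) = emeasure lborel A * integral\<^sup>N lborel h" .
qed

definition tail_kernel :: "real \<Rightarrow> real \<Rightarrow> 'a::euclidean_space \<Rightarrow> ennreal" where
  "tail_kernel R q z = indicator {z. R \<le> norm z} z * ennreal (norm z powr (- q))"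

lemma borel_measurable_tail_kernel [measurable]: "tail_kernel R q \<in> borel_measurable borel"
  unfolding tail_kernel_def[abs_def] by measurable

definition tail_const :: "nat \<Rightarrow> real \<Rightarrow> real" where
  "tail_const d q = unit_ball_vol d * 2 ^ d / (1 - 2 powr (real d - q))"

lemma tail_const_nonneg: "real d < q \<Longrightarrow> 0 \<le> tail_const d q"
  using powr_less_mono[of "real d - q" 0 2]
  by (auto simp: tail_const_def unit_ball_vol_def intro!: divide_nonneg_nonneg)

lemma dyadic_ball_term_eq:
  fixes R q V :: real
  assumes "0 < R"
  shows "(R * 2 ^ k) powr (- q) * (V * (R * 2 ^ Suc k) ^ d)
       = V * 2 ^ d * R powr (real d - q) * (2 powr (real d - q)) ^ k"
proof -
  have a: "(R * 2 ^ k) powr (- q) = R powr (- q) * 2 powr (- q * real k)"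
    using assms by (simp add: powr_mult powr_realpow[symmetric] powr_powr mult.commute)
  have b: "(R * 2 ^ Suc k) ^ d = R powr real d * 2 powr real d * 2 powr (real d * real k)"
    using assms by (simp add: power_mult_distrib powr_realpow[symmetric] powr_powr power_add
        powr_add[symmetric] algebra_simps power_mult[symmetric] mult.commute[of d k])
  have c: "(2 powr (real d - q)) ^ k = 2 powr ((real d - q) * real k)"
    by (simp add: powr_realpow[symmetric] powr_powr)
  have e1: "R powr (real d - q) = R powr real d * R powr (- q)"
    using assms by (simp add: powr_add[symmetric])
  have e2: "2 powr ((real d - q) * real k) = 2 powr (real d * real k) * 2 powr (- q * real k)"
    by (simp add: powr_add[symmetric] algebra_simps)
  have e3: "(2::real) ^ d = 2 powr real d" by (simp add: powr_realpow)
  show ?thesis unfolding a b c e1 e2 e3 by (simp only: ac_simps)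
qed

text \<open>On the dyadic shell \<open>R 2\<^sup>k \<le> \<parallel>z\<parallel> < R 2\<^sup>k\<^sup>+\<^sup>1\<close> the kernel is at most \<open>(R 2\<^sup>k) powr (-q)\<close>;
  summing over the shells gives a geometric series with ratio \<open>2 powr (d - q) < 1\<close>.\<close>
lemma nn_integral_tail_kernel_le:
  assumes R: "0 < R" and q: "real DIM('a) < q"
  shows "integral\<^sup>N lborel (tail_kernel R q :: 'a::euclidean_space \<Rightarrow> ennreal)
           \<le> ennreal (tail_const DIM('a) q * R powr (real DIM('a) - q))"
proof -
  define d where "d = DIM('a)"
  define V where "V = unit_ball_vol (real d)"
  define x where "x = 2 powr (real d - q)"
  define A where "A = V * 2 ^ d * R powr (real d - q)"
  have V: "0 \<le> V" unfolding V_def unit_ball_vol_def by (auto intro!: divide_nonneg_nonneg)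
  have x: "0 \<le> x" "x < 1" using q powr_less_mono[of "real d - q" 0 2] unfolding x_def d_def by auto
  define t where "t k z = ennreal ((R * 2 ^ k) powr (- q)) * indicator (ball (0::'a) (R * 2 ^ Suc k)) z" for k z
  have kernel_le: "tail_kernel R q z \<le> (\<Sum>k. t k z)" for z
  proof (cases "R \<le> norm z")
    case True
    obtain n where "norm z / R < 2 ^ n" using real_arch_pow[of 2 "norm z / R"] by auto
    then have ex: "\<exists>n. norm z < R * 2 ^ n" using R by (auto simp: divide_less_eq mult.commute)
    define m where "m = (LEAST n. norm z < R * 2 ^ n)"
    have m: "norm z < R * 2 ^ m" unfolding m_def using ex by (rule LeastI_ex)
    then obtain k where k: "m = Suc k" using True by (cases m) auto
    have shell: "R * 2 ^ k \<le> norm z"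
      using not_less_Least[of k "\<lambda>n. norm z < R * 2 ^ n"] k unfolding m_def by force
    have "tail_kernel R q z = ennreal (norm z powr (- q))"
      using True by (simp add: tail_kernel_def)
    also have "\<dots> \<le> t k z"
      using m k shell q R by (auto simp: t_def intro!: ennreal_leI powr_mono2')
    also have "\<dots> \<le> (\<Sum>k. t k z)"
      using sum_le_suminf[OF summableI, of "{k}" "\<lambda>k. t k z"] by simp
    finally show ?thesis .
  qed (simp add: tail_kernel_def)
  have "integral\<^sup>N lborel (tail_kernel R q :: 'a \<Rightarrow> ennreal) \<le> (\<integral>\<^sup>+z. (\<Sum>k. t k z) \<partial>lborel)"
    by (rule nn_integral_mono) (rule kernel_le)
  also have "\<dots> = (\<Sum>k. integral\<^sup>N lborel (t k))"
  proof (rule nn_integral_suminf)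
    fix k
    have "t k = (\<lambda>z. ennreal ((R * 2 ^ k) powr (- q)) * indicator (ball (0::'a) (R * 2 ^ Suc k)) z)"
      by (simp add: t_def fun_eq_iff)
    show "t k \<in> borel_measurable lborel"
      unfolding \<open>t k = _\<close> by (rule borel_measurable_times_ennreal) (auto intro!: borel_measurable_indicator)
  qed
  also have "\<dots> = (\<Sum>k. ennreal (A * x ^ k))"
  proof (rule suminf_cong)
    fix k
    have "integral\<^sup>N lborel (t k) = ennreal ((R * 2 ^ k) powr (- q)) * emeasure lborel (ball (0::'a) (R * 2 ^ Suc k))"
      unfolding t_def by (rule nn_integral_cmult_indicator) simp
    also have "\<dots> = ennreal ((R * 2 ^ k) powr (- q) * (V * (R * 2 ^ Suc k) ^ d))"
      using R V by (subst emeasure_ball) (auto simp: V_def d_def ennreal_mult[symmetric])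
    finally show "integral\<^sup>N lborel (t k) = ennreal (A * x ^ k)"
      unfolding A_def x_def dyadic_ball_term_eq[OF R] .
  qed
  also have "\<dots> = ennreal (\<Sum>k. A * x ^ k)"
    using x V R by (intro suminf_ennreal2 summable_mult summable_geometric mult_nonneg_nonneg) (auto simp: A_def)
  also have "(\<Sum>k. A * x ^ k) = tail_const d q * R powr (real d - q)"
    using x by (simp add: suminf_mult suminf_geometric summable_geometric tail_const_def A_def V_def x_def)
  finally show ?thesis unfolding d_def .
qed

lemma norm_diff_ge_infdist_frontier:
  fixes x y :: "'a::euclidean_space"
  assumes "x \<in> \<Omega>" "\<Omega> \<subseteq> U" "y \<notin> U"
    and frontier_far: "\<forall>z\<in>frontier U. R \<le> infdist z (closure \<Omega>)"
  shows "R \<le> norm (x - y)"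
proof -
  have "closed_segment x y \<inter> frontier U \<noteq> {}"
    using assms(1-3) by (intro connected_Int_frontier) auto
  then obtain z where z: "z \<in> closed_segment x y" "z \<in> frontier U" by auto
  have "R \<le> infdist z (closure \<Omega>)" using frontier_far z(2) by blast
  also have "\<dots> \<le> dist z x" using assms(1) by (intro infdist_le) (auto intro: closure_subset[THEN subsetD])
  also have "\<dots> \<le> dist x y" using dist_in_closed_segment[OF z(1)] by simp
  finally show ?thesis by (simp add: dist_norm)
qed

lemma frac_W1_cong:
  assumes "\<And>x. x \<in> \<Omega> \<Longrightarrow> v x = w x"
  shows "frac_W1 \<sigma> \<Omega> v \<longleftrightarrow> frac_W1 \<sigma> \<Omega> w"
proof -
  have "(\<lambda>x. indicator \<Omega> x *\<^sub>R v x) = (\<lambda>x. indicator \<Omega> x *\<^sub>R w x)"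
    using assms by (auto simp: indicator_def)
  moreover have "(\<lambda>p. ennreal (\<bar>v (fst p) - v (snd p)\<bar> / norm (fst p - snd p) powr (real DIM('a) + \<sigma>)) * indicator (\<Omega> \<times> \<Omega>) p)
      = (\<lambda>p. ennreal (\<bar>w (fst p) - w (snd p)\<bar> / norm (fst p - snd p) powr (real DIM('a) + \<sigma>)) * indicator (\<Omega> \<times> \<Omega>) p)"
    using assms by (auto simp: indicator_def fun_eq_iff)
  ultimately show ?thesis unfolding frac_W1_def set_integrable_def by simp
qed

lemma Vg_patch:
  assumes "w \<in> Vg s \<Omega> g"
  shows "(\<lambda>x. if x \<in> \<Omega> then w x else g' x) \<in> Vg s \<Omega> g'"
  using assms frac_W1_cong[of \<Omega> "\<lambda>x. if x \<in> \<Omega> then w x else g' x" w] by (auto simp: Vg_def)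

definition Is_integrand :: "real \<Rightarrow> 'a::euclidean_space set \<Rightarrow> ('a \<Rightarrow> real) \<Rightarrow> 'a \<times> 'a \<Rightarrow> ennreal" where
  "Is_integrand s \<Omega> u p =
     ennreal (Fs DIM('a) s ((u (fst p) - u (snd p)) / norm (fst p - snd p))
              / norm (fst p - snd p) powr (real DIM('a) + 2 * s - 1)) * indicator (QOmega \<Omega>) p"

lemma Is_eq_nn_integral_Is_integrand: "Is s \<Omega> u = integral\<^sup>N (lborel \<Otimes>\<^sub>M lborel) (Is_integrand s \<Omega> u)"
  unfolding Is_def Is_integrand_def[abs_def] by simp

lemma Is_integrand_le_powr:
  fixes x y :: "'a::euclidean_space"
  assumes "0 \<le> s" "x \<noteq> y" "\<bar>u x\<bar> \<le> M" "\<bar>u y\<bar> \<le> M"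
  shows "Is_integrand s \<Omega> u (x, y) \<le> ennreal (4 * M\<^sup>2 * norm (x - y) powr (- (real DIM('a) + 2 * s + 1)))"
proof -
  have "Is_integrand s \<Omega> u (x, y)
      \<le> ennreal (Fs DIM('a) s ((u x - u y) / norm (x - y)) / norm (x - y) powr (real DIM('a) + 2 * s - 1))"
    unfolding Is_integrand_def by (simp add: indicator_def)
  also have "\<dots> \<le> ennreal (4 * M\<^sup>2 * norm (x - y) powr (- (real DIM('a) + 2 * s + 1)))"
    using Fs_difference_quotient_le[OF assms(1) _ assms(3,4), of "norm (x - y)" "DIM('a)"] assms(2)
    by (intro ennreal_leI) simp
  finally show ?thesis .
qed

lemma Is_integrand_le_tail_kernel:
  fixes x y :: "'a::euclidean_space"
  assumes "0 \<le> s" "0 < R"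
    and agree: "\<And>x. x \<in> \<Omega> \<Longrightarrow> v x = w x"
    and far: "\<And>x y. x \<in> \<Omega> \<Longrightarrow> y \<notin> \<Omega> \<Longrightarrow> v y \<noteq> w y \<Longrightarrow> R \<le> norm (x - y)"
    and bounded: "\<bar>v x\<bar> \<le> M" "\<bar>v y\<bar> \<le> M"
  defines "q \<equiv> real DIM('a) + 2 * s + 1"
  shows "Is_integrand s \<Omega> v (x, y) \<le> Is_integrand s \<Omega> w (x, y)
           + ennreal (4 * M\<^sup>2) * (indicator \<Omega> x * tail_kernel R q (y - x) + indicator \<Omega> y * tail_kernel R q (x - y))"
    (is "_ \<le> _ + ?B")
proof (cases "v x = w x \<and> v y = w y")
  case True
  then show ?thesis by (simp add: Is_integrand_def add_increasing2)
next
  case differ: False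
  show ?thesis
  proof (cases "(x, y) \<in> QOmega \<Omega>")
    case False
    then show ?thesis by (simp add: Is_integrand_def)
  next
    case True
    then have "x \<in> \<Omega> \<and> y \<notin> \<Omega> \<and> v y \<noteq> w y \<or> y \<in> \<Omega> \<and> x \<notin> \<Omega> \<and> v x \<noteq> w x"
      using differ agree by (auto simp: QOmega_def)
    then have far_xy: "R \<le> norm (x - y)" and B: "?B = ennreal (4 * M\<^sup>2 * norm (x - y) powr (- q))"
      using far[of x y] far[of y x] by (auto simp: norm_minus_commute tail_kernel_def ennreal_mult)
    have "Is_integrand s \<Omega> v (x, y) \<le> ennreal (4 * M\<^sup>2 * norm (x - y) powr (- q))"
      unfolding q_def using far_xy assms(1,2) bounded by (intro Is_integrand_le_powr) auto
    then show ?thesis unfolding B by (simp add: add_increasing)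
  qed
qed

lemma Is_le_Is_add_tail:
  fixes \<Omega> :: "'a::euclidean_space set"
  assumes "0 \<le> s" "0 < R" and [measurable]: "\<Omega> \<in> sets borel" and finite: "emeasure lborel \<Omega> < \<infinity>"
    and agree: "\<And>x. x \<in> \<Omega> \<Longrightarrow> v x = w x"
    and far: "\<And>x y. x \<in> \<Omega> \<Longrightarrow> y \<notin> \<Omega> \<Longrightarrow> v y \<noteq> w y \<Longrightarrow> R \<le> norm (x - y)"
    and bounded: "AE x in lborel. \<bar>v x\<bar> \<le> M"
  shows "Is s \<Omega> v \<le> Is s \<Omega> w + ennreal (8 * M\<^sup>2 * measure lborel \<Omega>
           * tail_const DIM('a) (real DIM('a) + 2 * s + 1) * R powr (- 1 - 2 * s))"
proof -
  define q where "q = real DIM('a) + 2 * s + 1"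
  define K where "K = tail_const DIM('a) q * R powr (- 1 - 2 * s)"
  have exponent: "- 1 - 2 * s = real DIM('a) - q" by (simp add: q_def)
  define m where "m = measure lborel \<Omega>"
  define B where "B p = ennreal (4 * M\<^sup>2) * (indicator \<Omega> (fst p) * tail_kernel R q (snd p - fst p)
                        + indicator \<Omega> (snd p) * tail_kernel R q (fst p - snd p))" for p :: "'a \<times> 'a"
  have K: "0 \<le> K" using assms(1,2) by (simp add: K_def q_def tail_const_nonneg)
  have m: "emeasure lborel \<Omega> = ennreal m" "0 \<le> m"
    using finite by (auto simp: m_def emeasure_eq_ennreal_measure)
  have T: "integral\<^sup>N lborel (tail_kernel R q :: 'a \<Rightarrow> ennreal) \<le> ennreal K"
    unfolding K_def exponent using assms(1) by (intro nn_integral_tail_kernel_le[OF assms(2)]) (simp add: q_def)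
  have "AE p in lborel \<Otimes>\<^sub>M lborel. \<bar>v (fst p)\<bar> \<le> M \<and> \<bar>v (snd p)\<bar> \<le> M"
    using lborel.AE_pair_measure_fst[OF bounded] lborel.AE_pair_measure_snd[OF bounded] by eventually_elim simp
  then have pointwise: "AE p in lborel \<Otimes>\<^sub>M lborel. Is_integrand s \<Omega> v p \<le> Is_integrand s \<Omega> w p + B p"
  proof eventually_elim
    case (elim p)
    then show ?case
      using Is_integrand_le_tail_kernel[OF assms(1,2) agree far, where x="fst p" and y="snd p" and M=M]
      by (simp add: B_def q_def)
  qed
  have "integral\<^sup>N (lborel \<Otimes>\<^sub>M lborel) B
      = ennreal (4 * M\<^sup>2) * (emeasure lborel \<Omega> * integral\<^sup>N lborel (tail_kernel R q :: 'a \<Rightarrow> ennreal)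
                              + emeasure lborel \<Omega> * integral\<^sup>N lborel (tail_kernel R q :: 'a \<Rightarrow> ennreal))"
    unfolding B_def by (simp add: nn_integral_cmult nn_integral_add nn_integral_pair_indicator_translate)
  also have "\<dots> \<le> ennreal (4 * M\<^sup>2) * (ennreal (m * K) + ennreal (m * K))"
    using mult_left_mono[OF T, of "ennreal m"] m K by (intro mult_left_mono add_mono) (auto simp: ennreal_mult)
  also have "\<dots> = ennreal (8 * M\<^sup>2 * m * K)"
    using m K by (simp add: ennreal_plus[symmetric] ennreal_mult[symmetric])
  finally have B_le: "integral\<^sup>N (lborel \<Otimes>\<^sub>M lborel) B \<le> ennreal (8 * M\<^sup>2 * m * K)" .
  have "Is s \<Omega> v \<le> (\<integral>\<^sup>+p. Is_integrand s \<Omega> w p + B p \<partial>(lborel \<Otimes>\<^sub>M lborel))"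
    unfolding Is_eq_nn_integral_Is_integrand by (rule nn_integral_mono_AE[OF pointwise])
  also have "\<dots> \<le> Is s \<Omega> w + integral\<^sup>N (lborel \<Otimes>\<^sub>M lborel) B"
    unfolding Is_eq_nn_integral_Is_integrand by (rule nn_integral_add_le) (simp add: B_def)
  also have "\<dots> \<le> Is s \<Omega> w + ennreal (8 * M\<^sup>2 * m * K)"
    using B_le by (rule add_left_mono)
  finally show ?thesis by (simp add: K_def m_def q_def mult.assoc)
qed

lemma minimizer_Is_le:
  fixes \<Omega> U :: "'a::euclidean_space set"
  assumes "0 \<le> s" "0 < R" "\<Omega> \<in> sets borel" "emeasure lborel \<Omega> < \<infinity>"
    and far: "\<And>x y. x \<in> \<Omega> \<Longrightarrow> y \<notin> U \<Longrightarrow> R \<le> norm (x - y)"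
    and same_data: "\<And>y. y \<notin> \<Omega> \<Longrightarrow> y \<in> U \<Longrightarrow> g y = g' y"
    and w: "w \<in> Vg s \<Omega> g" and minimizer: "is_minimizer s \<Omega> g' u"
    and w_bounded: "AE x in lborel. \<bar>w x\<bar> \<le> M"
    and g'_bounded: "AE x in lborel. x \<notin> \<Omega> \<longrightarrow> \<bar>g' x\<bar> \<le> M"
  shows "Is s \<Omega> u \<le> Is s \<Omega> w + ennreal (8 * M\<^sup>2 * measure lborel \<Omega>
           * tail_const DIM('a) (real DIM('a) + 2 * s + 1) * R powr (- 1 - 2 * s))"
proof -
  define v where "v = (\<lambda>x. if x \<in> \<Omega> then w x else g' x)"
  have w_eq_g: "w y = g y" if "y \<notin> \<Omega>" for y
    using w that by (simp add: Vg_def)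
  have "Is s \<Omega> u \<le> Is s \<Omega> v"
    using minimizer Vg_patch[OF w, of g'] by (simp add: is_minimizer_def v_def)
  also have "\<dots> \<le> Is s \<Omega> w + ennreal (8 * M\<^sup>2 * measure lborel \<Omega>
           * tail_const DIM('a) (real DIM('a) + 2 * s + 1) * R powr (- 1 - 2 * s))"
  proof (rule Is_le_Is_add_tail[OF assms(1-4)])
    show "v x = w x" if "x \<in> \<Omega>" for x
      using that by (simp add: v_def)
    show "R \<le> norm (x - y)" if "x \<in> \<Omega>" "y \<notin> \<Omega>" "v y \<noteq> w y" for x y
      using that far[of x y] same_data[of y] w_eq_g[of y] by (auto simp: v_def)
    show "AE x in lborel. \<bar>v x\<bar> \<le> M"
      using w_bounded g'_bounded by eventually_elim (simp add: v_def)
  qed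
  finally show ?thesis .
qed

theorem mainTheorem4:
  fixes \<Omega> :: "'a::euclidean_space set"
    and s :: real
    and g :: "'a \<Rightarrow> real"
    and OmH :: "real \<Rightarrow> 'a set"
    and eta :: "real \<Rightarrow> 'a \<Rightarrow> real"
    and c1 c2 :: real
    and u :: "'a \<Rightarrow> real"
    and uH :: "real \<Rightarrow> 'a \<Rightarrow> real"
  assumes s: "0 < s" "s < 1/2"
    and dom: "open \<Omega>" "connected \<Omega>" "bounded \<Omega>" "\<Omega> \<noteq> {}"
    and g_meas: "(\<lambda>x. indicator (- \<Omega>) x * g x) \<in> borel_measurable lborel"
    and g_bdd: "\<exists>M. AE x in lborel. x \<in> - \<Omega> \<longrightarrow> \<bar>g x\<bar> \<le> M"
    and c: "0 < c1" "c1 \<le> c2"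
    and OmH: "\<And>H. H > 0 \<Longrightarrow> open (OmH H) \<and> bounded (OmH H) \<and> \<Omega> \<subseteq> OmH H \<and>
               (\<forall>x\<in>frontier (OmH H). c1 * H \<le> infdist x (closure \<Omega>) \<and> infdist x (closure \<Omega>) \<le> c2 * H)"
    and eta: "\<And>H. H > 0 \<Longrightarrow> smooth_on_set (- \<Omega>) (eta H) \<and>
               (\<forall>x\<in>- \<Omega>. 0 \<le> eta H x \<and> eta H x \<le> 1) \<and>
               closure {x \<in> - \<Omega>. eta H x \<noteq> 0} \<subseteq> closure (OmH (H + 1)) - \<Omega> \<and>
               (\<forall>x\<in>OmH H - \<Omega>. eta H x = 1)"
    and u_min: "is_minimizer s \<Omega> g u"
    and uH_min: "\<And>H. H \<ge> 1 \<Longrightarrow> is_minimizer s \<Omega> (\<lambda>x. g x * eta H x) (uH H)"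
    and u_bdd: "\<exists>M. AE x in lborel. \<bar>u x\<bar> \<le> M"
    and uH_bdd: "\<exists>M. \<forall>H\<ge>1. AE x in lborel. \<bar>uH H x\<bar> \<le> M"
  shows "\<exists>C::real. \<forall>H\<ge>1.
           Is s \<Omega> u \<le> Is s \<Omega> (uH H) + ennreal (C * H powr (-1 - 2 * s)) \<and>
           Is s \<Omega> (uH H) \<le> Is s \<Omega> u + ennreal (C * H powr (-1 - 2 * s))"
proof -
  obtain M where g_le: "AE x in lborel. x \<notin> \<Omega> \<longrightarrow> \<bar>g x\<bar> \<le> M"
    and u_le: "AE x in lborel. \<bar>u x\<bar> \<le> M" and uH_le: "\<And>H. 1 \<le> H \<Longrightarrow> AE x in lborel. \<bar>uH H x\<bar> \<le> M"
  proof -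
    obtain Mg Mu MH where Mg: "AE x in lborel. x \<in> - \<Omega> \<longrightarrow> \<bar>g x\<bar> \<le> Mg"
      and Mu: "AE x in lborel. \<bar>u x\<bar> \<le> Mu" and MH: "\<forall>H\<ge>1. AE x in lborel. \<bar>uH H x\<bar> \<le> MH"
      using g_bdd u_bdd uH_bdd by blast
    show ?thesis
    proof (rule that[of "max Mg (max Mu MH)"])
      show "AE x in lborel. x \<notin> \<Omega> \<longrightarrow> \<bar>g x\<bar> \<le> max Mg (max Mu MH)"
        using Mg by eventually_elim auto
      show "AE x in lborel. \<bar>u x\<bar> \<le> max Mg (max Mu MH)"
        using Mu by eventually_elim auto
      show "AE x in lborel. \<bar>uH H x\<bar> \<le> max Mg (max Mu MH)" if "1 \<le> H" for H
        using MH that by (auto elim!: eventually_mono)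
    qed
  qed
  have \<Omega>: "\<Omega> \<in> sets borel" "emeasure lborel \<Omega> < \<infinity>"
    using dom(1) emeasure_bounded_finite[OF dom(3)] by auto
  define C where "C = 8 * M\<^sup>2 * measure lborel \<Omega> * tail_const DIM('a) (real DIM('a) + 2 * s + 1) * c1 powr (- 1 - 2 * s)"
  show ?thesis
  proof (intro exI allI impI conjI)
    fix H :: real assume H: "1 \<le> H"
    have eta_H: "\<forall>x. x \<notin> \<Omega> \<longrightarrow> 0 \<le> eta H x \<and> eta H x \<le> 1 \<and> (x \<in> OmH H \<longrightarrow> eta H x = 1)"
      using eta[of H] H by auto
    have g_eta_le: "AE x in lborel. x \<notin> \<Omega> \<longrightarrow> \<bar>g x * eta H x\<bar> \<le> M"
      using g_le by eventually_elim (use eta_H in \<open>auto simp: abs_mult intro: order_trans[OF mult_left_le]\<close>)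
    have far: "\<And>x y. x \<in> \<Omega> \<Longrightarrow> y \<notin> OmH H \<Longrightarrow> c1 * H \<le> norm (x - y)"
      using OmH[of H] H by (intro norm_diff_ge_infdist_frontier[of _ \<Omega> "OmH H"]) auto
    have bound: "8 * M\<^sup>2 * measure lborel \<Omega> * tail_const DIM('a) (real DIM('a) + 2 * s + 1)
                   * (c1 * H) powr (- 1 - 2 * s) = C * H powr (- 1 - 2 * s)"
      using c(1) H by (simp add: C_def powr_mult)
    show "Is s \<Omega> u \<le> Is s \<Omega> (uH H) + ennreal (C * H powr (- 1 - 2 * s))"
      using minimizer_Is_le[OF _ _ \<Omega> far _ _ u_min uH_le[OF H] g_le, where g="\<lambda>x. g x * eta H x"] uH_min[OF H] eta_H s c(1) H
      by (simp add: is_minimizer_def bound)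
    show "Is s \<Omega> (uH H) \<le> Is s \<Omega> u + ennreal (C * H powr (- 1 - 2 * s))"
      using minimizer_Is_le[OF _ _ \<Omega> far _ _ uH_min[OF H] u_le g_eta_le, where g=g] u_min eta_H s c(1) H
      by (simp add: is_minimizer_def bound)
  qed
qed

end
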